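(* Let $\beta_1,\beta_2$ be complex numbers with $\mathrm{Re}(\beta_j)\ge\gamma\ge1$ for $j=1,2$. Let $\psi_j(z)=1/(z+\beta_j)$ for $\mathrm{Re}(z)\ge0$ and $\theta=\psi_1\circ\psi_2$. Then for all $z,w\in\mathbb C$ with $\mathrm{Re}(z)\ge0$ and $\mathrm{Re}(w)\ge0$, $$|\theta(z)-\theta(w)|\le(\gamma^2+1)^{-2}|z-w|.$$ *)

theory Defs
  imports "HOL-Analysis.Analysis"
begin

end

theory Submission
  imports Defs
begin

text \<open>Writing \<open>u = z + \<beta>\<^sub>2\<close>, the composite is the Moebius map \<open>\<theta> z = u / (1 + \<beta>\<^sub>1 u)\<close>,
  whose difference quotient is \<open>1 / ((1 + \<beta>\<^sub>1 u) (1 + \<beta>\<^sub>1 v))\<close>. Both \<open>u\<close> and \<open>v\<close> lie in the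
  half-plane \<open>Re \<ge> \<gamma>\<close>, and for \<open>p, q\<close> in that half-plane with \<open>\<gamma> \<ge> 1\<close> one has
  \<open>|1 + p q| \<ge> \<gamma>\<^sup>2 + 1\<close>.\<close>

lemma norm_one_plus_mult_ge:
  fixes p q :: complex and \<gamma> :: real
  assumes "\<gamma> \<ge> 1" and "Re p \<ge> \<gamma>" and "Re q \<ge> \<gamma>"
  shows "\<gamma>\<^sup>2 + 1 \<le> cmod (1 + p * q)"
proof (rule power2_le_imp_le)
  define a b c d where "a = Re p" and "b = Im p" and "c = Re q" and "d = Im q"
  have "\<gamma>\<^sup>2 \<le> a * c"
    using assms by (simp add: a_def c_def power2_eq_square mult_mono)
  then have ac: "(\<gamma>\<^sup>2 + 1)\<^sup>2 \<le> (1 + a * c)\<^sup>2"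
    using assms by (intro power_mono) auto
  have "1 \<le> a\<^sup>2" "1 \<le> c\<^sup>2"
    using assms by (simp_all add: a_def c_def one_le_power)
  then have "b\<^sup>2 + d\<^sup>2 \<le> b\<^sup>2 * c\<^sup>2 + a\<^sup>2 * d\<^sup>2"
    by (simp add: add_mono mult_le_cancel_left1 mult_le_cancel_right1)
  moreover have "(cmod (1 + p * q))\<^sup>2
      = (1 + a * c)\<^sup>2 + (b - d)\<^sup>2 + (b * d)\<^sup>2 + (b\<^sup>2 * c\<^sup>2 + a\<^sup>2 * d\<^sup>2 - b\<^sup>2 - d\<^sup>2)"
    unfolding cmod_power2 by (simp add: a_def b_def c_def d_def power2_eq_square algebra_simps)
  ultimately show "(\<gamma>\<^sup>2 + 1)\<^sup>2 \<le> (cmod (1 + p * q))\<^sup>2"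
    using ac by (smt (verit) zero_le_power2)
qed simp

lemma inverse_shift_inverse:
  fixes u b :: "'a :: field"
  assumes "u \<noteq> 0"
  shows "1 / (1 / u + b) = u / (1 + b * u)"
  using assms by (simp add: field_simps)

lemma moebius_diff:
  fixes u v b :: "'a :: field"
  assumes "1 + b * u \<noteq> 0" and "1 + b * v \<noteq> 0"
  shows "u / (1 + b * u) - v / (1 + b * v) = (u - v) / ((1 + b * u) * (1 + b * v))"
  using assms by (simp add: divide_simps) (simp add: algebra_simps)

lemma moebius_lipschitz_half_plane:
  fixes u v \<beta> :: complex and \<gamma> :: real
  assumes "\<gamma> \<ge> 1" and "Re \<beta> \<ge> \<gamma>" and "Re u \<ge> \<gamma>" and "Re v \<ge> \<gamma>"
  shows "cmod (u / (1 + \<beta> * u) - v / (1 + \<beta> * v)) \<le> cmod (u - v) / (\<gamma>\<^sup>2 + 1)\<^sup>2"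
proof -
  have pos: "0 < \<gamma>\<^sup>2 + 1"
    by (simp add: add_nonneg_pos)
  have ku: "\<gamma>\<^sup>2 + 1 \<le> cmod (1 + \<beta> * u)" and kv: "\<gamma>\<^sup>2 + 1 \<le> cmod (1 + \<beta> * v)"
    using assms by (simp_all add: norm_one_plus_mult_ge)
  then have "1 + \<beta> * u \<noteq> 0" "1 + \<beta> * v \<noteq> 0"
    using pos by auto
  then have "cmod (u / (1 + \<beta> * u) - v / (1 + \<beta> * v))
      = cmod (u - v) / (cmod (1 + \<beta> * u) * cmod (1 + \<beta> * v))"
    by (simp add: moebius_diff norm_divide norm_mult)
  also have "\<dots> \<le> cmod (u - v) / ((\<gamma>\<^sup>2 + 1) * (\<gamma>\<^sup>2 + 1))"
    using ku kv pos by (intro divide_left_mono mult_mono mult_pos_pos) auto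
  finally show ?thesis
    by (simp add: power2_eq_square)
qed

theorem lemma7p1:
  fixes \<beta>1 \<beta>2 :: complex and \<gamma> :: real and z w :: complex
  assumes "\<gamma> \<ge> 1" and "Re \<beta>1 \<ge> \<gamma>" and "Re \<beta>2 \<ge> \<gamma>"
    and "Re z \<ge> 0" and "Re w \<ge> 0"
  defines "\<psi>1 \<equiv> (\<lambda>u::complex. 1 / (u + \<beta>1))"
    and "\<psi>2 \<equiv> (\<lambda>u::complex. 1 / (u + \<beta>2))"
  defines "\<theta> \<equiv> \<psi>1 \<circ> \<psi>2"
  shows "cmod (\<theta> z - \<theta> w) \<le> cmod (z - w) / (\<gamma>\<^sup>2 + 1)\<^sup>2"
proof -
  define u v where "u = z + \<beta>2" and "v = w + \<beta>2"
  have "Re u \<ge> \<gamma>" "Re v \<ge> \<gamma>"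
    using assms(3-5) by (auto simp: u_def v_def)
  moreover from this have "u \<noteq> 0" "v \<noteq> 0"
    using assms(1) by auto
  then have "\<theta> z = u / (1 + \<beta>1 * u)" "\<theta> w = v / (1 + \<beta>1 * v)"
    by (simp_all add: \<theta>_def \<psi>1_def \<psi>2_def u_def v_def flip: inverse_shift_inverse)
  moreover have "u - v = z - w"
    by (simp add: u_def v_def)
  ultimately show ?thesis
    using moebius_lipschitz_half_plane[OF assms(1,2)] by metis
qed

end
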